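(* Let $1\le t$ and $x_{1:t}\in\mathcal X^t$. Then for every $i\in\mathcal X$, $$P_{\mathrm{Bayes}}(x_{t+1}=i\mid x_{1:t}) = \begin{cases}\dfrac{n^t_i+\frac12}{t+\frac{m_t}2+\beta_t} & \text{if } n^t_i>0,\\[2ex] \dfrac{\beta_t/(D-m_t)}{t+\frac{m_t}2+\beta_t} & \text{if } n^t_i=0,\end{cases}\qquad \beta_t:=\frac{D-m_t}{2}\,\frac{\gamma^t_{m_t+1}}{\gamma^t_{m_t}},$$ where for $1\le k\le D$, $\gamma^t_k:=\sum_{m'=k}^{D}\binom{D-k}{m'-k}\binom{D}{m'}^{-1}\frac{\Gamma(\frac12 m')}{\Gamma(t+1+\frac12 m')}$ and $\gamma^t_{D+1}:=0$ (the second case arising only when $m_t<D$).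
   Context: Let $\mathcal X$ be a finite alphabet of size $D$. For $x_{1:t}$, $n^t_i$ is the number of occurrences of $i$, $\mathcal A_t=\{x_1,\dots,x_t\}$, $m_t=|\mathcal A_t|$. For a nonempty $\mathcal A'\subseteq\mathcal X$, the KT estimator on $\mathcal A'$ assigns to a sequence $y_{1:s}$ the probability $P_{\mathrm{KT}_{\mathcal A'}}(y_{1:s})=\frac{\Gamma(|\mathcal A'|/2)}{\Gamma(s+|\mathcal A'|/2)}\prod_{i\in\mathcal A'}\frac{\Gamma(c_i+\frac12)}{\Gamma(\frac12)}$ if all symbols of $y_{1:s}$ lie in $\mathcal A'$ (with $c_i$ the count of $i$ in $y_{1:s}$), and $0$ otherwise. Bayesian sub-alphabet weighting: $P_{\mathrm{Bayes}}(y_{1:s})=\sum_{\emptyset\ne\mathcal A'\subseteq\mathcal X}\frac{1}{D\binom{D}{|\mathcal A'|}}P_{\mathrm{KT}_{\mathcal A'}}(y_{1:s})$, and $P_{\mathrm{Bayes}}(x_{t+1}=i\mid x_{1:t})=P_{\mathrm{Bayes}}(x_{1:t}i)/P_{\mathrm{Bayes}}(x_{1:t})$. *)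

theory Defs
  imports "HOL-Analysis.Analysis"
begin

definition cnt :: "'a list \<Rightarrow> 'a \<Rightarrow> nat" where
  "cnt ys i = count_list ys i"

definition P_KT :: "'a set \<Rightarrow> 'a list \<Rightarrow> real" where
  "P_KT A ys = (if set ys \<subseteq> A then
      Gamma (real (card A) / 2) / Gamma (real (length ys) + real (card A) / 2) *
      (\<Prod>i\<in>A. Gamma (real (cnt ys i) + 1/2) / Gamma (1/2))
    else 0)"

definition P_Bayes :: "'a set \<Rightarrow> 'a list \<Rightarrow> real" where
  "P_Bayes X ys = (\<Sum>A\<in>{A. A \<subseteq> X \<and> A \<noteq> {}}.
      1 / (real (card X) * real (card X choose card A)) * P_KT A ys)"

definition P_Bayes_cond :: "'a set \<Rightarrow> 'a list \<Rightarrow> 'a \<Rightarrow> real" where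
  "P_Bayes_cond X xs i = P_Bayes X (xs @ [i]) / P_Bayes X xs"

definition gam :: "nat \<Rightarrow> nat \<Rightarrow> nat \<Rightarrow> real" where
  "gam D t k = (if k = D + 1 then 0 else
     (\<Sum>m'=k..D. real ((D - k) choose (m' - k)) / real (D choose m') *
        Gamma (real m' / 2) / Gamma (real t + 1 + real m' / 2)))"

definition beta :: "nat \<Rightarrow> nat \<Rightarrow> nat \<Rightarrow> real" where
  "beta D t m = (real D - real m) / 2 * (gam D t (m + 1) / gam D t m)"

end

theory Submission
  imports Defs
begin

text \<open>
  On a sub-alphabet A containing the m observed symbols, the KT probability of x of length t
  factors as C(x) * Gamma(|A|/2) / Gamma(t + |A|/2), where C(x), the product over observed
  symbols of Gamma(n_i + 1/2) / Gamma(1/2), does not depend on A. Grouping the supersets of the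
  observed symbols by size gives P_Bayes(x) = C(x) / D * gam_real D t m, where gam_real D (t + 1) k
  is the paper's gamma^t_k. Appending i multiplies C by n_i + 1/2, replaces t by t + 1, and
  replaces m by m + 1 only if i is new. The denominator comes from the recurrence
  gam_real D t m = (t + m/2) gamma^t_m + (D - m)/2 gamma^t_(m+1).
\<close>

lemma Gamma_real_plus1: "(s::real) > 0 \<Longrightarrow> Gamma (s + 1) = s * Gamma s"
  by (rule Gamma_plus1) (auto dest: nonpos_Ints_nonpos)

definition gam_real :: "nat \<Rightarrow> real \<Rightarrow> nat \<Rightarrow> real" where
  "gam_real D s k = (\<Sum>m'=k..D. real ((D - k) choose (m' - k)) / real (D choose m') *
        Gamma (real m' / 2) / Gamma (s + real m' / 2))"

lemma gam_eq_gam_real: "k \<le> D + 1 \<Longrightarrow> gam D t k = gam_real D (real t + 1) k"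
  unfolding gam_def gam_real_def by auto

lemma gam_real_pos:
  assumes "1 \<le> k" "k \<le> D" "s > 0"
  shows "gam_real D s k > 0"
  unfolding gam_real_def
proof (rule sum_pos2[where i=k])
  show "0 < real ((D - k) choose (k - k)) / real (D choose k) * Gamma (real k / 2) / Gamma (s + real k / 2)"
    using assms by (auto intro!: divide_pos_pos mult_pos_pos)
qed (use assms in \<open>auto intro!: divide_nonneg_pos mult_nonneg_nonneg less_imp_le[OF Gamma_real_pos]\<close>)

lemma binomial_absorption_shift:
  assumes "m < m'" "m \<le> D"
  shows "real (m' - m) * real ((D - m) choose (m' - m))
       = (real D - real m) * real ((D - (m + 1)) choose (m' - (m + 1)))"
proof -
  have "(m' - m) * ((D - m) choose (m' - m)) = (D - m) * ((D - m - 1) choose (m' - m - 1))"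
    using assms by (intro times_binomial_minus1_eq) simp
  then have "real (m' - m) * real ((D - m) choose (m' - m))
      = real (D - m) * real ((D - m - 1) choose (m' - m - 1))"
    by (metis of_nat_mult)
  moreover have "D - m - 1 = D - (m + 1)" "m' - m - 1 = m' - (m + 1)" by simp_all
  ultimately show ?thesis
    using assms by (simp only: of_nat_diff less_imp_le)
qed

text \<open>\<open>\<Gamma>(z + 1) = z \<Gamma>(z)\<close> splits each term into a multiple of \<open>s + m/2\<close> and one of
  \<open>(m' - m)/2\<close>; binomial absorption turns the latter into the terms of the sum at \<open>m + 1\<close>.\<close>
lemma gam_real_recurrence:
  assumes "m \<le> D" "s > 0"
  shows "gam_real D s m = (s + real m / 2) * gam_real D (s + 1) m
           + (real D - real m) / 2 * gam_real D (s + 1) (m + 1)"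
proof -
  define g where "g m' = Gamma (real m' / 2) / Gamma (s + 1 + real m' / 2) / real (D choose m')" for m'
  define b where "b m' = real ((D - m) choose (m' - m)) * g m'" for m'
  have "gam_real D s m = (\<Sum>m'=m..D. (s + real m' / 2) * b m')"
    unfolding gam_real_def
  proof (rule sum.cong[OF refl])
    fix m' assume "m' \<in> {m..D}"
    have Gamma_shift: "Gamma (s + 1 + real m' / 2) = (s + real m' / 2) * Gamma (s + real m' / 2)"
      using Gamma_real_plus1[of "s + real m' / 2"] assms by (simp add: algebra_simps)
    have cancel: "c / B * \<Gamma> / G = z * (c * (\<Gamma> / (z * G) / B))"
      if "z \<noteq> 0" for c B \<Gamma> G z :: real
      using that by (simp add: field_simps)
    show "real ((D - m) choose (m' - m)) / real (D choose m') * Gamma (real m' / 2)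
          / Gamma (s + real m' / 2) = (s + real m' / 2) * b m'"
      unfolding b_def g_def Gamma_shift by (rule cancel) (use assms in simp)
  qed
  also have "\<dots> = (s + real m / 2) * (\<Sum>m'=m..D. b m') + (\<Sum>m'=m..D. real (m' - m) * b m') / 2"
    by (simp add: sum_distrib_left sum_divide_distrib flip: sum.distrib)
      (intro sum.cong, auto simp: of_nat_diff field_simps)
  also have "(\<Sum>m'=m..D. b m') = gam_real D (s + 1) m"
    unfolding gam_real_def b_def g_def by (intro sum.cong) (auto simp: add_ac)
  also have "(\<Sum>m'=m..D. real (m' - m) * b m') = (\<Sum>m'=Suc m..D. real (m' - m) * b m')"
    using assms by (simp add: sum.atLeast_Suc_atMost)
  also have "\<dots> = (real D - real m) * gam_real D (s + 1) (m + 1)"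
    unfolding gam_real_def sum_distrib_left
  proof (rule sum.cong)
    fix m' assume "m' \<in> {m + 1..D}"
    then show "real (m' - m) * b m' = (real D - real m) * (real ((D - (m + 1)) choose (m' - (m + 1)))
        / real (D choose m') * Gamma (real m' / 2) / Gamma (s + 1 + real m' / 2))"
      using binomial_absorption_shift[of m m' D] assms
      by (simp add: b_def g_def mult.assoc[symmetric])
  qed simp
  finally show ?thesis by simp
qed

lemma sum_Pow_by_card:
  assumes "finite T"
  shows "(\<Sum>B\<in>Pow T. h (card B)) = (\<Sum>k=0..card T. real (card T choose k) * (h k :: real))"
proof -
  have "(\<Sum>B\<in>Pow T. h (card B)) = (\<Sum>k=0..card T. \<Sum>B\<in>{B. B \<in> Pow T \<and> card B = k}. h (card B))"
    by (rule sum.group[symmetric]) (use assms in \<open>auto intro: card_mono\<close>)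
  also have "\<dots> = (\<Sum>k=0..card T. real (card T choose k) * h k)"
  proof (rule sum.cong[OF refl])
    fix k
    have "(\<Sum>B\<in>{B. B \<in> Pow T \<and> card B = k}. h (card B)) = (\<Sum>B\<in>{B. B \<subseteq> T \<and> card B = k}. h k)"
      by (rule sum.cong) auto
    then show "(\<Sum>B\<in>{B. B \<in> Pow T \<and> card B = k}. h (card B)) = real (card T choose k) * h k"
      using n_subsets[OF assms, of k] by simp
  qed
  finally show ?thesis .
qed

lemma sum_supersets_by_card:
  assumes "finite X" "S \<subseteq> X"
  shows "(\<Sum>A | S \<subseteq> A \<and> A \<subseteq> X. h (card A))
    = (\<Sum>k=card S..card X. real ((card X - card S) choose (k - card S)) * (h k :: real))"
proof -
  have fin: "finite S" "finite (X - S)" using assms finite_subset by auto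
  have "(\<Sum>A | S \<subseteq> A \<and> A \<subseteq> X. h (card A)) = (\<Sum>B\<in>Pow (X - S). h (card (S \<union> B)))"
    by (rule sum.reindex_bij_witness[where j="\<lambda>A. A - S" and i="\<lambda>B. S \<union> B"])
      (use assms in \<open>auto simp: Un_absorb1\<close>)
  also have "\<dots> = (\<Sum>B\<in>Pow (X - S). h (card S + card B))"
    using fin by (intro sum.cong refl) (subst card_Un_disjoint, auto intro: finite_subset)
  also have "\<dots> = (\<Sum>k=0..card X - card S. real ((card X - card S) choose k) * h (card S + k))"
    using sum_Pow_by_card[OF fin(2), of "\<lambda>k. h (card S + k)"] assms fin
    by (simp add: card_Diff_subset)
  also have "\<dots> = (\<Sum>k=card S..card X. real ((card X - card S) choose (k - card S)) * h k)"
    using card_mono[OF assms]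
      sum.shift_bounds_cl_nat_ivl[of "\<lambda>k. real ((card X - card S) choose (k - card S)) * h k"
        0 "card S" "card X - card S"]
    by (simp add: add.commute)
  finally show ?thesis .
qed

definition KT_count_prod :: "'a list \<Rightarrow> real" where
  "KT_count_prod ys = (\<Prod>j\<in>set ys. Gamma (real (cnt ys j) + 1/2) / Gamma (1/2))"

lemma KT_count_prod_superset:
  assumes "finite A" "set ys \<subseteq> A"
  shows "(\<Prod>j\<in>A. Gamma (real (cnt ys j) + 1/2) / Gamma (1/2)) = KT_count_prod ys"
proof -
  have "Gamma (1/2 :: real) \<noteq> 0" by (simp add: Gamma_one_half_real)
  then show ?thesis
    unfolding KT_count_prod_def
    by (intro prod.mono_neutral_right) (use assms in \<open>auto simp: cnt_def count_list_0_iff\<close>)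
qed

lemma KT_count_prod_pos: "KT_count_prod ys > 0"
  unfolding KT_count_prod_def by (intro prod_pos) simp

lemma KT_count_prod_snoc:
  "KT_count_prod (xs @ [i]) = (real (cnt xs i) + 1/2) * KT_count_prod xs"
proof -
  define f :: "'a list \<Rightarrow> 'a \<Rightarrow> real" where "f ys j = Gamma (real (cnt ys j) + 1/2) / Gamma (1/2)" for ys j
  define A where "A = insert i (set xs)"
  have A: "finite A" "i \<in> A" "set xs \<subseteq> A" "set (xs @ [i]) \<subseteq> A" by (auto simp: A_def)
  have "f (xs @ [i]) i = (real (cnt xs i) + 1/2) * f xs i"
    using Gamma_real_plus1[of "real (cnt xs i) + 1/2"] by (simp add: f_def cnt_def add_ac)
  moreover have "(\<Prod>j\<in>A - {i}. f (xs @ [i]) j) = (\<Prod>j\<in>A - {i}. f xs j)"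
    by (intro prod.cong) (auto simp: f_def cnt_def)
  ultimately have "(\<Prod>j\<in>A. f (xs @ [i]) j) = (real (cnt xs i) + 1/2) * (\<Prod>j\<in>A. f xs j)"
    using prod.remove[OF A(1,2), of "f (xs @ [i])"] prod.remove[OF A(1,2), of "f xs"] by simp
  then show ?thesis
    using KT_count_prod_superset[OF A(1,3)] KT_count_prod_superset[OF A(1,4)] by (simp add: f_def)
qed

lemma P_KT_superset:
  assumes "finite A" "set ys \<subseteq> A"
  shows "P_KT A ys = Gamma (real (card A) / 2) / Gamma (real (length ys) + real (card A) / 2)
    * KT_count_prod ys"
  unfolding P_KT_def using assms KT_count_prod_superset[OF assms] by simp

lemma P_Bayes_eq:
  assumes "finite X" "set ys \<subseteq> X" "ys \<noteq> []"
  shows "P_Bayes X ys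
    = KT_count_prod ys / real (card X) * gam_real (card X) (real (length ys)) (card (set ys))"
proof -
  define D where "D = card X"
  define h where "h k = KT_count_prod ys / (real D * real (D choose k))
    * Gamma (real k / 2) / Gamma (real (length ys) + real k / 2)" for k
  have "P_Bayes X ys = (\<Sum>A\<in>{A. A \<subseteq> X \<and> A \<noteq> {}}. if set ys \<subseteq> A then h (card A) else 0)"
    unfolding P_Bayes_def
  proof (intro sum.cong refl)
    fix A assume "A \<in> {A. A \<subseteq> X \<and> A \<noteq> {}}"
    then have "finite A" using assms(1) finite_subset by blast
    then show "1 / (real (card X) * real (card X choose card A)) * P_KT A ys
      = (if set ys \<subseteq> A then h (card A) else 0)"
      by (simp add: P_KT_superset h_def D_def mult_ac) (simp add: P_KT_def)
  qed
  also have "\<dots> = (\<Sum>A | set ys \<subseteq> A \<and> A \<subseteq> X. h (card A))"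
    using assms by (subst sum.inter_filter[symmetric]) (auto intro!: sum.cong)
  also have "\<dots> = (\<Sum>k=card (set ys)..D. real ((D - card (set ys)) choose (k - card (set ys))) * h k)"
    unfolding D_def using assms(1,2) by (rule sum_supersets_by_card)
  also have "\<dots> = KT_count_prod ys / real D * gam_real D (real (length ys)) (card (set ys))"
    unfolding gam_real_def sum_distrib_left h_def by (intro sum.cong) (simp_all add: field_simps)
  finally show ?thesis unfolding D_def .
qed

lemma P_Bayes_cond_eq:
  assumes "finite X" "set xs \<subseteq> X" "xs \<noteq> []" "i \<in> X"
  shows "P_Bayes_cond X xs i = (real (cnt xs i) + 1/2)
    * gam_real (card X) (real (length xs) + 1) (card (set (xs @ [i])))
    / gam_real (card X) (real (length xs)) (card (set xs))"
proof -
  have "card (set xs) \<le> card X" using card_mono[OF assms(1,2)] .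
  moreover have "1 \<le> card (set xs)" using assms(3) by (simp add: Suc_le_eq card_gt_0_iff)
  ultimately have "gam_real (card X) (real (length xs)) (card (set xs)) > 0" "real (card X) > 0"
    using assms(3) by (auto intro!: gam_real_pos)
  moreover have "KT_count_prod xs > 0" by (rule KT_count_prod_pos)
  ultimately show ?thesis
    unfolding P_Bayes_cond_def using assms
    by (auto simp: P_Bayes_eq KT_count_prod_snoc add.commute)
qed

lemma cnt_pos_iff [simp]: "0 < cnt xs i \<longleftrightarrow> i \<in> set xs"
  using count_list_0_iff[of xs i] by (auto simp: cnt_def)

lemma beta_denominator:
  assumes "1 \<le> m" "m \<le> D" "t > 0"
  shows "real t + real m / 2 + beta D t m = gam_real D (real t) m / gam_real D (real t + 1) m"
proof -
  have pos: "gam_real D (real t + 1) m > 0" using assms by (intro gam_real_pos) simp_all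
  have "real t + real m / 2 + beta D t m
      = ((real t + real m / 2) * gam_real D (real t + 1) m
         + (real D - real m) / 2 * gam_real D (real t + 1) (m + 1)) / gam_real D (real t + 1) m"
    using assms pos by (simp add: beta_def gam_eq_gam_real field_simps)
  also have "\<dots> = gam_real D (real t) m / gam_real D (real t + 1) m"
    using assms by (subst gam_real_recurrence) simp_all
  finally show ?thesis .
qed

theorem mainTheorem8:
  fixes X :: "'a set" and xs :: "'a list" and i :: 'a
  assumes "finite X" and "X \<noteq> {}"
    and "set xs \<subseteq> X" and "1 \<le> length xs" and "i \<in> X"
  shows "P_Bayes_cond X xs i =
    (let t = length xs; D = card X; m = card (set xs); b = beta D t m in
      if cnt xs i > 0 then (real (cnt xs i) + 1/2) / (real t + real m / 2 + b)
      else (b / (real D - real m)) / (real t + real m / 2 + b))"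
proof -
  define t where "t = length xs"
  define D where "D = card X"
  define m where "m = card (set xs)"
  have xs: "xs \<noteq> []" "t > 0" using assms(4) by (auto simp: t_def)
  have mD: "1 \<le> m" "m \<le> D"
    using xs card_mono[OF assms(1,3)] by (auto simp: m_def D_def Suc_le_eq card_gt_0_iff)
  have cond: "P_Bayes_cond X xs i = (real (cnt xs i) + 1/2)
      * gam_real D (real t + 1) (card (set (xs @ [i]))) / gam_real D (real t) m"
    using P_Bayes_cond_eq[OF assms(1,3) xs(1) assms(5)] by (simp add: t_def D_def m_def)
  show ?thesis
  proof (cases "i \<in> set xs")
    case True
    then show ?thesis
      using cond beta_denominator[OF mD xs(2)] by (simp add: Let_def t_def D_def m_def insert_absorb)
  next
    case False
    then have "m < D"
      using psubset_card_mono[OF assms(1), of "set xs"] assms(3,5) by (auto simp: m_def D_def)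
    have "gam_real D (real t + 1) m > 0" using mD xs(2) by (intro gam_real_pos) simp_all
    then have "P_Bayes_cond X xs i = gam_real D (real t + 1) (m + 1) / (2 * gam_real D (real t + 1) m)
        / (gam_real D (real t) m / gam_real D (real t + 1) m)"
      using cond False by (simp add: m_def cnt_def)
    also have "\<dots> = beta D t m / (real D - real m) / (real t + real m / 2 + beta D t m)"
      using \<open>m < D\<close> unfolding beta_denominator[OF mD xs(2)] by (simp add: beta_def gam_eq_gam_real)
    finally show ?thesis
      using False by (simp add: Let_def t_def D_def m_def)
  qed
qed

end
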